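(* Let $\rho$ be a state of a $d$-dimensional system ($d<\infty$), let $A,B$ be two copies of this system with $\rho_A=\rho_B=\rho$, and let $j\neq0$ be an integer. Let $d^{(j)}:=\dim\mathcal{V}^{(j)}_{\rm in}$, where $\mathcal{V}^{(j)}_{\rm in}:=\mathrm{span}\{|n+j,m\rangle\langle n,m|\}_{n,m}$ (over all $n,m$ with $n,n+j,m\in\{0,\dots,d-1\}$). Then $$\Delta M_A^{(j)}\le\big\|(\rho_A\otimes\rho_B)^{(j)}\big\|_{d^{(j)}\text{-KF}}-\|\rho^{(j)}\|_1.$$
   Context: Local observable $L=\sum_{n=0}^{d-1}n|n\rangle\langle n|$ on each system, $L_{AB}=L\otimes\mathbb{I}+\mathbb{I}\otimes L$. For a single system, $\rho^{(j)}:=\sum_{n}|n+j\rangle\langle n+j|\rho|n\rangle\langle n|$ (terms with $n+j$ out of range omitted). For the bipartite system, the $j$th mode is $X^{(j)}:=\sum_c\Pi_{c+j}X\Pi_c$, with $\Pi_c$ the projector onto the eigenvalue-$c$ eigenspace of $L_{AB}$. $M^{(j)}(\sigma):=\|\sigma^{(j)}\|_1$ (trace norm). $\Delta M_A^{(j)}:=\max_{V_{AB}}M^{(j)}(\sigma_A)-M^{(j)}(\rho)$, with $\sigma_A=\mathrm{tr}_B[V_{AB}(\rho\otimes\rho)V_{AB}^\dagger]$ and the maximum over all unitaries with $[V_{AB},L_{AB}]=0$. For an operator $P$, $\|P\|_{\alpha\text{-KF}}$ is the Ky-Fan $\alpha$-norm, the sum of the $\alpha$ largest singular values of $P$. *)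

theory Defs
  imports "Jordan_Normal_Form.Schur_Decomposition" "Jordan_Normal_Form.Char_Poly"
          "HOL-Library.Function_Algebras"
begin

(* Operators on the bipartite system AB are (d*d) x (d*d)
   complex matrices, basis vector |a,b> having index a*d + b. *)

definition singular_values :: "complex mat \<Rightarrow> real list" where
  "singular_values A = (THE \<sigma>. length \<sigma> = dim_col A \<and> sorted_wrt (\<ge>) \<sigma> \<and>
      (\<forall>s\<in>set \<sigma>. 0 \<le> s) \<and>
      char_poly (mat_adjoint A * A) = (\<Prod>s\<leftarrow>\<sigma>. [:- complex_of_real (s^2), 1:]))"

definition trace_norm :: "complex mat \<Rightarrow> real" where
  "trace_norm A = sum_list (singular_values A)"

definition ky_fan_norm :: "nat \<Rightarrow> complex mat \<Rightarrow> real" where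
  "ky_fan_norm \<alpha> A = sum_list (take \<alpha> (singular_values A))"

definition hermitian :: "complex mat \<Rightarrow> bool" where
  "hermitian A \<longleftrightarrow> mat_adjoint A = A"

definition density :: "nat \<Rightarrow> complex mat \<Rightarrow> bool" where
  "density d \<rho> \<longleftrightarrow> \<rho> \<in> carrier_mat d d \<and> hermitian \<rho> \<and>
     (\<forall>v\<in>carrier_vec d. 0 \<le> Re (\<Sum>i<d. cnj (v $ i) * (\<rho> *\<^sub>v v) $ i)) \<and>
     (\<Sum>i<d. \<rho> $$ (i,i)) = 1"

definition unitary :: "nat \<Rightarrow> complex mat \<Rightarrow> bool" where
  "unitary n V \<longleftrightarrow> V \<in> carrier_mat n n \<and> V * mat_adjoint V = 1\<^sub>m n \<and> mat_adjoint V * V = 1\<^sub>m n"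

definition mode1 :: "int \<Rightarrow> complex mat \<Rightarrow> complex mat" where
  "mode1 j \<rho> = mat (dim_row \<rho>) (dim_col \<rho>)
     (\<lambda>(r,c). if int r = int c + j then \<rho> $$ (r,c) else 0)"

definition Mj :: "int \<Rightarrow> complex mat \<Rightarrow> real" where
  "Mj j \<sigma> = trace_norm (mode1 j \<sigma>)"

(* local observable L_AB = L (x) I + I (x) L, diagonal with eigenvalue a+b on |a,b> *)
definition LAB :: "nat \<Rightarrow> complex mat" where
  "LAB d = mat (d*d) (d*d) (\<lambda>(r,c). if r = c then of_nat (r div d + r mod d) else 0)"

definition PiAB :: "nat \<Rightarrow> int \<Rightarrow> complex mat" where
  "PiAB d c = mat (d*d) (d*d) (\<lambda>(r,s). if r = s \<and> int (r div d + r mod d) = c then 1 else 0)"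

(* j-th mode of a bipartite operator: X^(j) = sum_c Pi_{c+j} X Pi_c,
   c ranging over the eigenvalues 0..2d-2 of L_AB *)
definition mode2 :: "nat \<Rightarrow> int \<Rightarrow> complex mat \<Rightarrow> complex mat" where
  "mode2 d j X = foldr (\<lambda>c acc. PiAB d (c + j) * X * PiAB d c + acc) [0..2 * int d - 2]
     (0\<^sub>m (d*d) (d*d))"

definition tensor :: "nat \<Rightarrow> complex mat \<Rightarrow> complex mat \<Rightarrow> complex mat" where
  "tensor d X Y = mat (d*d) (d*d) (\<lambda>(r,c). X $$ (r div d, c div d) * Y $$ (r mod d, c mod d))"

definition ptrace_B :: "nat \<Rightarrow> complex mat \<Rightarrow> complex mat" where
  "ptrace_B d X = mat d d (\<lambda>(a,a'). \<Sum>b<d. X $$ (a*d+b, a'*d+b))"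

definition DeltaM_A :: "nat \<Rightarrow> int \<Rightarrow> complex mat \<Rightarrow> real" where
  "DeltaM_A d j \<rho> =
     Sup {Mj j (ptrace_B d (V * tensor d \<rho> \<rho> * mat_adjoint V)) | V.
            unitary (d*d) V \<and> V * LAB d = LAB d * V} - Mj j \<rho>"

(* operators on AB as functions of (flattened) row/column index;
   complex scalar multiplication *)
definition opscale :: "complex \<Rightarrow> (nat \<Rightarrow> nat \<Rightarrow> complex) \<Rightarrow> (nat \<Rightarrow> nat \<Rightarrow> complex)" where
  "opscale a f = (\<lambda>r s. a * f r s)"

definition Vin_gens :: "nat \<Rightarrow> int \<Rightarrow> (nat \<Rightarrow> nat \<Rightarrow> complex) set" where
  "Vin_gens d j = {(\<lambda>r s. if r = nat (int n + j) * d + m \<and> s = n * d + m then 1 else 0) | n m.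
       n < d \<and> m < d \<and> 0 \<le> int n + j \<and> int n + j < int d}"

definition dj :: "nat \<Rightarrow> int \<Rightarrow> nat" where
  "dj d j = vector_space.dim opscale (module.span opscale (Vin_gens d j))"

end

(* A unitary V commuting with L_AB preserves the eigenspaces of L_AB, so it commutes with taking
   the j-th mode; and the partial trace over B sends the j-th mode of a bipartite operator to the
   j-th mode of its reduction. Hence sigma_A^(j) = tr_B(V X^(j) V^H)^(j) for X = rho (x) rho.
   The trace norm of a matrix Z is a pairing sum_{x,y} w_xy Z_yx with |w_xy| <= 1. Lifted to AB,
   the kernel w (x) 1_B restricted to the j-th mode has row and column sums at most 1 and total
   mass at most d^(j); by a singular value decomposition and a rearrangement inequality, pairing
   such a kernel with a matrix A gives at most the Ky Fan d^(j)-norm of A. Ky Fan norms are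
   unitarily invariant, so the bound for V X^(j) V^H is the Ky Fan norm of X^(j), uniformly in V. *)

theory Submission
  imports Defs
begin

section \<open>Adjoints and unitary matrices\<close>

lemma mat_adjoint_dim [simp]:
  "dim_row (mat_adjoint A) = dim_col A" "dim_col (mat_adjoint A) = dim_row A"
  unfolding mat_adjoint_def by auto

lemma mat_adjoint_carrier [simp, intro]: "A \<in> carrier_mat n m \<Longrightarrow> mat_adjoint A \<in> carrier_mat m n"
  unfolding carrier_mat_def by simp

lemma index_mat_adjoint [simp]:
  "i < dim_col A \<Longrightarrow> k < dim_row A \<Longrightarrow> mat_adjoint A $$ (i,k) = cnj (A $$ (k,i))"
  unfolding mat_adjoint_def by (simp add: mat_of_rows_def)

lemma mat_adjoint_adjoint [simp]: "mat_adjoint (mat_adjoint (A :: complex mat)) = A"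
  by (rule eq_matI) auto

lemma mat_adjoint_one [simp]: "mat_adjoint (1\<^sub>m n :: complex mat) = 1\<^sub>m n"
  by (rule eq_matI) auto

lemma mat_adjoint_mult:
  "A \<in> carrier_mat n m \<Longrightarrow> B \<in> carrier_mat m p \<Longrightarrow>
   mat_adjoint (A * B :: complex mat) = mat_adjoint B * mat_adjoint A"
  by (rule eq_matI) (auto simp: scalar_prod_def intro: sum.cong)

lemma index_mult_sum:
  "A \<in> carrier_mat n m \<Longrightarrow> B \<in> carrier_mat m p \<Longrightarrow> i < n \<Longrightarrow> k < p \<Longrightarrow>
   (A * B) $$ (i,k) = (\<Sum>t<m. A $$ (i,t) * B $$ (t,k))"
  by (simp add: scalar_prod_def atLeast0LessThan)

lemma index_adjoint_mult:
  "A \<in> carrier_mat n m \<Longrightarrow> B \<in> carrier_mat n p \<Longrightarrow> i < m \<Longrightarrow> k < p \<Longrightarrow>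
   (mat_adjoint A * B) $$ (i,k) = (\<Sum>l<n. cnj (A $$ (l,i)) * B $$ (l,k))"
  by (simp add: scalar_prod_def atLeast0LessThan)

lemma cnj_mult_self: "cnj z * z = complex_of_real ((cmod z)\<^sup>2)"
  by (metis complex_norm_square mult.commute)

lemma adjoint_mult_self_diag:
  assumes "A \<in> carrier_mat n m" "i < m"
  shows "(mat_adjoint A * A) $$ (i,i) = complex_of_real (\<Sum>l<n. (cmod (A $$ (l,i)))\<^sup>2)"
proof -
  have "(mat_adjoint A * A) $$ (i,i) = (\<Sum>l<n. cnj (A $$ (l,i)) * A $$ (l,i))"
    by (rule index_adjoint_mult[OF assms(1,1,2,2)])
  also have "\<dots> = complex_of_real (\<Sum>l<n. (cmod (A $$ (l,i)))\<^sup>2)"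
    by (simp only: of_real_sum cnj_mult_self)
  finally show ?thesis .
qed

lemma mult_adjoint_self_diag:
  assumes "A \<in> carrier_mat n m" "i < n"
  shows "(A * mat_adjoint A) $$ (i,i) = complex_of_real (\<Sum>l<m. (cmod (A $$ (i,l)))\<^sup>2)"
proof -
  have "(A * mat_adjoint A) $$ (i,i) = (\<Sum>l<m. A $$ (i,l) * cnj (A $$ (i,l)))"
    using assms by (subst index_mult_sum[of A n m "mat_adjoint A" n]) auto
  also have "\<dots> = complex_of_real (\<Sum>l<m. (cmod (A $$ (i,l)))\<^sup>2)"
    by (simp only: of_real_sum complex_norm_square)
  finally show ?thesis .
qed

lemma adjoint_mult_self_diag_eq_0:
  fixes A :: "complex mat"
  assumes A: "A \<in> carrier_mat n m" and i: "i < m" and l: "l < n"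
    and zero: "(mat_adjoint A * A) $$ (i,i) = 0"
  shows "A $$ (l,i) = 0"
proof -
  have "(\<Sum>l<n. (cmod (A $$ (l,i)))\<^sup>2) = 0"
    using adjoint_mult_self_diag[OF A i] zero by (metis of_real_eq_0_iff)
  thus ?thesis using l by (simp add: sum_nonneg_eq_0_iff)
qed

lemma adjoint_mult_self_mult:
  fixes A Q :: "complex mat"
  assumes "A \<in> carrier_mat n n" "Q \<in> carrier_mat n n"
  shows "mat_adjoint (A * Q) * (A * Q) = mat_adjoint Q * (mat_adjoint A * A) * Q"
  using assms by (simp add: mat_adjoint_mult[OF assms] assoc_mult_mat[of _ n n _ n _ n]
      mult_carrier_mat[of _ n n _ n])

lemma unitaryI: "U \<in> carrier_mat n n \<Longrightarrow> mat_adjoint U * U = 1\<^sub>m n \<Longrightarrow> unitary n U"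
  unfolding unitary_def using mat_mult_left_right_inverse[of "mat_adjoint U" n U] by auto

lemma unitaryD:
  assumes "unitary n U"
  shows "U \<in> carrier_mat n n" "mat_adjoint U * U = 1\<^sub>m n" "U * mat_adjoint U = 1\<^sub>m n"
  using assms unfolding unitary_def by auto

lemma unitary_one: "unitary n (1\<^sub>m n)"
  unfolding unitary_def by auto

lemma unitary_mult:
  assumes U: "unitary n U" and V: "unitary n V"
  shows "unitary n (U * V)"
proof (rule unitaryI)
  note u = unitaryD[OF U] and v = unitaryD[OF V]
  show "U * V \<in> carrier_mat n n" using u v by auto
  have "mat_adjoint (U * V) * (U * V) = mat_adjoint V * ((mat_adjoint U * U) * V)"
    using u(1) v(1) by (simp add: mat_adjoint_mult assoc_mult_mat[of _ n n _ n _ n])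
  also have "\<dots> = 1\<^sub>m n" using u v by simp
  finally show "mat_adjoint (U * V) * (U * V) = 1\<^sub>m n" .
qed

lemma unitary_col_norm:
  assumes "unitary n U" "i < n"
  shows "(\<Sum>k<n. (cmod (U $$ (k,i)))\<^sup>2) = 1"
  using adjoint_mult_self_diag[of U n n i] unitaryD[OF assms(1)] assms(2)
  by (simp del: of_real_sum of_real_power)

lemma unitary_row_norm:
  assumes "unitary n U" "i < n"
  shows "(\<Sum>k<n. (cmod (U $$ (i,k)))\<^sup>2) = 1"
  using mult_adjoint_self_diag[of U n n i] unitaryD[OF assms(1)] assms(2)
  by (simp del: of_real_sum of_real_power)

lemma hermitian_index:
  "hermitian H \<Longrightarrow> H \<in> carrier_mat n n \<Longrightarrow> i < n \<Longrightarrow> k < n \<Longrightarrow> H $$ (i,k) = cnj (H $$ (k,i))"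
  unfolding hermitian_def by (metis index_mat_adjoint carrier_matD)

lemma hermitian_adjoint_mult_self: "A \<in> carrier_mat n m \<Longrightarrow> hermitian (mat_adjoint A * A)"
  unfolding hermitian_def by (simp add: mat_adjoint_mult[of "mat_adjoint A" m n A m])

lemma hermitian_unitary_conj:
  assumes W: "W \<in> carrier_mat n n" and H: "H \<in> carrier_mat n n" and "hermitian H"
  shows "hermitian (mat_adjoint W * H * W)"
  using assms unfolding hermitian_def
  by (simp add: mat_adjoint_mult[of _ n n _ n] assoc_mult_mat[of _ n n _ n _ n])

section \<open>Unitary diagonalization of hermitian matrices\<close>

lemma carrier_vec_nonzero_dim: "v \<in> carrier_vec n \<Longrightarrow> v \<noteq> 0\<^sub>v n \<Longrightarrow> n \<noteq> 0"
  by auto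

lemma corthogonal_mat_col_norm_pos:
  assumes W: "W \<in> carrier_mat n n" and "corthogonal_mat W" and "k < n"
  shows "0 < (\<Sum>l<n. (cmod (W $$ (l,k)))\<^sup>2)"
proof -
  have "(mat_adjoint W * W) $$ (k,k) \<noteq> 0"
    using assms unfolding corthogonal_mat_def Let_def by auto
  hence "(\<Sum>l<n. (cmod (W $$ (l,k)))\<^sup>2) \<noteq> 0"
    using adjoint_mult_self_diag[OF W \<open>k < n\<close>] by (metis of_real_0)
  moreover have "0 \<le> (\<Sum>l<n. (cmod (W $$ (l,k)))\<^sup>2)" by (intro sum_nonneg) auto
  ultimately show ?thesis by linarith
qed

lemma unitary_normalized_columns:
  assumes W0: "W0 \<in> carrier_mat n n" and orth: "corthogonal_mat W0"
  defines "g k \<equiv> \<Sum>l<n. (cmod (W0 $$ (l,k)))\<^sup>2"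
  shows "unitary n (mat n n (\<lambda>(i,k). W0 $$ (i,k) / complex_of_real (sqrt (g k))))"
    (is "unitary n ?W")
proof (rule unitaryI)
  show Wc: "?W \<in> carrier_mat n n" by simp
  have gpos: "0 < g k" if "k < n" for k
    unfolding g_def by (rule corthogonal_mat_col_norm_pos[OF W0 orth that])
  show "mat_adjoint ?W * ?W = 1\<^sub>m n"
  proof (rule eq_matI)
    fix i k assume "i < dim_row (1\<^sub>m n :: complex mat)" "k < dim_col (1\<^sub>m n :: complex mat)"
    hence i: "i < n" and k: "k < n" by auto
    have "(mat_adjoint ?W * ?W) $$ (i,k) = (\<Sum>l<n. cnj (?W $$ (l,i)) * ?W $$ (l,k))"
      by (rule index_adjoint_mult[OF Wc Wc i k])
    also have "\<dots> = (\<Sum>l<n. cnj (W0 $$ (l,i)) * W0 $$ (l,k)) /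
        (complex_of_real (sqrt (g i)) * complex_of_real (sqrt (g k)))"
      unfolding sum_divide_distrib using i k by (intro sum.cong) auto
    also have "\<dots> = (mat_adjoint W0 * W0) $$ (i,k) /
        (complex_of_real (sqrt (g i)) * complex_of_real (sqrt (g k)))"
      by (simp only: index_adjoint_mult[OF W0 W0 i k])
    also have "\<dots> = 1\<^sub>m n $$ (i,k)"
    proof (cases "i = k")
      case True
      have num: "(mat_adjoint W0 * W0) $$ (k,k) = complex_of_real (g k)"
        unfolding g_def by (rule adjoint_mult_self_diag[OF W0 k])
      have den: "complex_of_real (sqrt (g k)) * complex_of_real (sqrt (g k)) = complex_of_real (g k)"
        using gpos[OF k] by (simp flip: of_real_mult)
      show ?thesis using gpos[OF k] k by (simp only: True num den) simp
    next
      case False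
      thus ?thesis using orth W0 i k unfolding corthogonal_mat_def Let_def diagonal_mat_def by simp
    qed
    finally show "(mat_adjoint ?W * ?W) $$ (i,k) = 1\<^sub>m n $$ (i,k)" .
  qed (use Wc in auto)
qed

lemma unitary_first_column:
  fixes v :: "complex vec"
  assumes v: "v \<in> carrier_vec n" and v0: "v \<noteq> 0\<^sub>v n"
  shows "\<exists>W c. unitary n W \<and> c \<noteq> 0 \<and> (\<forall>i<n. W $$ (i,0) = c * v $ i)"
proof -
  interpret cof_vec_space n "TYPE(complex)" .
  define b where "b = basis_completion v"
  from basis_completion[OF v v0, folded b_def]
  have dist_b: "distinct b" and indep: "\<not> lin_dep (set b)" and bc: "set b \<subseteq> carrier_vec n"
    and hdb: "hd b = v" and len_b: "length b = n" by auto
  have n: "n \<noteq> 0" by (rule carrier_vec_nonzero_dim[OF v v0])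
  then obtain vs where bv: "b = v # vs" using hdb len_b by (cases b) auto
  define ws where "ws = gram_schmidt n b"
  from gram_schmidt_result[OF bc dist_b indep refl, folded ws_def]
  have ws: "set ws \<subseteq> carrier_vec n" "corthogonal ws" "length ws = n" by (auto simp: len_b)
  have "ws ! 0 = v"
    using gram_schmidt_hd[OF v, of vs] bv ws_def n ws(3) by (metis hd_conv_nth length_0_conv)
  define W0 where "W0 = mat_of_cols n ws"
  have W0: "W0 \<in> carrier_mat n n" and orth: "corthogonal_mat W0"
    using orthogonal_mat_of_cols ws unfolding W0_def by auto
  have col0: "W0 $$ (i,0) = v $ i" if "i < n" for i
    unfolding W0_def using that n \<open>ws ! 0 = v\<close> ws(3) by (simp add: mat_of_cols_def)
  define W where "W = mat n n (\<lambda>(i,k). W0 $$ (i,k) /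
    complex_of_real (sqrt (\<Sum>l<n. (cmod (W0 $$ (l,k)))\<^sup>2)))"
  define g where "g = (\<Sum>l<n. (cmod (W0 $$ (l,0)))\<^sup>2)"
  have "unitary n W" unfolding W_def by (rule unitary_normalized_columns[OF W0 orth])
  moreover have "0 < g" unfolding g_def using corthogonal_mat_col_norm_pos[OF W0 orth] n by simp
  hence "1 / complex_of_real (sqrt g) \<noteq> 0" by simp
  moreover have "\<forall>i<n. W $$ (i,0) = (1 / complex_of_real (sqrt g)) * v $ i"
    using col0 n unfolding W_def g_def by auto
  ultimately show ?thesis by blast
qed

lemma unitary_eigenvector_first_column:
  assumes H: "H \<in> carrier_mat n n" and v: "eigenvector H v e"
  obtains W where "unitary n W" "\<And>i. i < n \<Longrightarrow> (H * W) $$ (i,0) = e * W $$ (i,0)"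
proof -
  have v: "v \<in> carrier_vec n" "v \<noteq> 0\<^sub>v n" "H *\<^sub>v v = e \<cdot>\<^sub>v v"
    using v H unfolding eigenvector_def by auto
  obtain W c where W: "unitary n W" and Wv: "\<And>i. i < n \<Longrightarrow> W $$ (i,0) = c * v $ i"
    using unitary_first_column[OF v(1,2)] by blast
  note w = unitaryD[OF W]
  have n: "0 < n" using carrier_vec_nonzero_dim[OF v(1,2)] by simp
  have "col W 0 = c \<cdot>\<^sub>v v" using w Wv v n by (intro eq_vecI) auto
  hence "(H * W) $$ (i,0) = e * W $$ (i,0)" if "i < n" for i
    using that H w v n Wv[OF that]
    by (simp add: mult_mat_vec_def[symmetric] flip: index_mult_mat_vec)
  thus ?thesis using that W by blast
qed

lemma mat_adjoint_one_block:
  "(U :: complex mat) \<in> carrier_mat n n \<Longrightarrow> mat_adjoint (four_block_mat (1\<^sub>m 1) (0\<^sub>m 1 n) (0\<^sub>m n 1) U) =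
    four_block_mat (1\<^sub>m 1) (0\<^sub>m 1 n) (0\<^sub>m n 1) (mat_adjoint U)"
  by (rule eq_matI) (auto simp: mat_adjoint_def mat_of_rows_def)

lemma unitary_one_block:
  assumes "unitary n U"
  shows "unitary (Suc n) (four_block_mat (1\<^sub>m 1) (0\<^sub>m 1 n) (0\<^sub>m n 1) U)"
proof -
  note u = unitaryD[OF assms]
  have "mat_adjoint (four_block_mat (1\<^sub>m 1) (0\<^sub>m 1 n) (0\<^sub>m n 1) U) *
      four_block_mat (1\<^sub>m 1) (0\<^sub>m 1 n) (0\<^sub>m n 1) U =
      four_block_mat (1\<^sub>m 1) (0\<^sub>m 1 n) (0\<^sub>m n 1) (1\<^sub>m n)"
    unfolding mat_adjoint_one_block[OF u(1)] using u
    by (subst mult_four_block_mat[of _ 1 1 _ n _ n _ _ 1 _ n]) auto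
  thus ?thesis using u by (intro unitaryI) auto
qed

lemma one_block_conj:
  fixes U A :: "complex mat"
  assumes U: "U \<in> carrier_mat n n" and A: "A \<in> carrier_mat n n"
  defines "E \<equiv> four_block_mat (1\<^sub>m 1) (0\<^sub>m 1 n) (0\<^sub>m n 1) U"
  shows "mat_adjoint E * four_block_mat (mat 1 1 (\<lambda>_. e)) (0\<^sub>m 1 n) (0\<^sub>m n 1) A * E =
    four_block_mat (mat 1 1 (\<lambda>_. e)) (0\<^sub>m 1 n) (0\<^sub>m n 1) (mat_adjoint U * A * U)"
proof -
  have UA: "mat_adjoint U * A \<in> carrier_mat n n" using U A by auto
  have "mat_adjoint E * four_block_mat (mat 1 1 (\<lambda>_. e)) (0\<^sub>m 1 n) (0\<^sub>m n 1) A =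
      four_block_mat (mat 1 1 (\<lambda>_. e)) (0\<^sub>m 1 n) (0\<^sub>m n 1) (mat_adjoint U * A)"
    unfolding E_def mat_adjoint_one_block[OF U] using U A UA
    by (simp add: mult_four_block_mat[of _ 1 1 _ n _ n _ _ 1 _ n] left_add_zero_mat[OF UA])
  thus ?thesis unfolding E_def using U A UA
    by (simp add: mult_four_block_mat[of _ 1 1 _ n _ n _ _ 1 _ n])
qed

lemma hermitian_deflation:
  assumes H: "H \<in> carrier_mat (Suc n) (Suc n)" and h: "hermitian H" and W: "unitary (Suc n) W"
    and eig: "\<And>i. i < Suc n \<Longrightarrow> (H * W) $$ (i,0) = e * W $$ (i,0)"
  shows "\<exists>A \<in> carrier_mat n n. hermitian A \<and>
    mat_adjoint W * H * W = four_block_mat (mat 1 1 (\<lambda>_. e)) (0\<^sub>m 1 n) (0\<^sub>m n 1) A"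
proof -
  note w = unitaryD[OF W]
  define B where "B = mat_adjoint W * H * W"
  have Bc: "B \<in> carrier_mat (Suc n) (Suc n)" unfolding B_def using w H by auto
  have Bh: "hermitian B" unfolding B_def by (rule hermitian_unitary_conj[OF w(1) H h])
  have col0: "B $$ (i,0) = (if i = 0 then e else 0)" if i: "i < Suc n" for i
  proof -
    have "B $$ (i,0) = (mat_adjoint W * (H * W)) $$ (i,0)"
      unfolding B_def using w H by (simp add: assoc_mult_mat[of _ "Suc n" "Suc n" _ "Suc n" _ "Suc n"])
    also have "\<dots> = (\<Sum>l<Suc n. cnj (W $$ (l,i)) * (H * W) $$ (l,0))"
      using w H i by (intro index_adjoint_mult) auto
    also have "\<dots> = e * (\<Sum>l<Suc n. cnj (W $$ (l,i)) * W $$ (l,0))"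
      unfolding sum_distrib_left by (intro sum.cong refl) (simp add: eig mult.left_commute)
    also have "(\<Sum>l<Suc n. cnj (W $$ (l,i)) * W $$ (l,0)) = (mat_adjoint W * W) $$ (i,0)"
      using w i by (intro index_adjoint_mult[symmetric]) auto
    finally show ?thesis using w i by simp
  qed
  have row0: "B $$ (0,k) = (if k = 0 then e else 0)" if k: "k < Suc n" for k
    using hermitian_index[OF Bh Bc, of 0 k] hermitian_index[OF Bh Bc, of 0 0] col0[OF k] col0[of 0] k
    by (cases "k = 0") auto
  define A where "A = mat n n (\<lambda>(i,k). B $$ (Suc i, Suc k))"
  have "hermitian A" unfolding hermitian_def
    by (rule eq_matI) (auto simp: A_def intro: hermitian_index[OF Bh Bc, symmetric])
  moreover have "B = four_block_mat (mat 1 1 (\<lambda>_. e)) (0\<^sub>m 1 n) (0\<^sub>m n 1) A"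
    by (rule eq_matI) (use Bc col0 row0 in \<open>auto simp: A_def\<close>)
  ultimately show ?thesis unfolding B_def A_def by auto
qed

theorem hermitian_unitarily_diagonalizable:
  assumes "H \<in> carrier_mat n n" "hermitian H" "char_poly H = (\<Prod>e\<leftarrow>es. [:-e,1:])"
  shows "\<exists>U. unitary n U \<and> mat_adjoint U * H * U = mat_diag n (\<lambda>i. es ! i)"
  using assms
proof (induction es arbitrary: n H)
  case Nil
  have "n = 0" using degree_monic_char_poly[OF Nil(1)] Nil(3) by simp
  hence "mat_adjoint (1\<^sub>m n) * H * 1\<^sub>m n = mat_diag n (\<lambda>i. [] ! i)"
    using Nil(1) by (intro eq_matI) (auto simp: mat_diag_def)
  thus ?case using unitary_one by blast
next
  case (Cons e es n H)
  have cp: "char_poly H = [:-e,1:] * (\<Prod>e\<leftarrow>es. [:-e,1:])" using Cons(4) by simp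
  have "eigenvalue H e" unfolding eigenvalue_root_char_poly[OF Cons(2)] cp by simp
  from find_eigenvector[OF Cons(2) this] obtain v where v: "eigenvector H v e" by blast
  hence "v \<in> carrier_vec n" "v \<noteq> 0\<^sub>v n" using Cons(2) unfolding eigenvector_def by auto
  then obtain n' where n: "n = Suc n'" using carrier_vec_nonzero_dim by (cases n) auto
  obtain W where W: "unitary n W" and eig: "\<And>i. i < n \<Longrightarrow> (H * W) $$ (i,0) = e * W $$ (i,0)"
    using unitary_eigenvector_first_column[OF Cons(2) v] by blast
  note w = unitaryD[OF W]
  obtain A where A: "A \<in> carrier_mat n' n'" "hermitian A"
    and blk: "mat_adjoint W * H * W = four_block_mat (mat 1 1 (\<lambda>_. e)) (0\<^sub>m 1 n') (0\<^sub>m n' 1) A"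
    using hermitian_deflation[OF Cons(2,3)[unfolded n] W[unfolded n] eig[unfolded n]] by blast
  have "similar_mat (mat_adjoint W * H * W) H" unfolding similar_mat_def similar_mat_wit_def Let_def
    by (intro exI[of _ "mat_adjoint W"] exI[of _ W]) (use w Cons(2) in auto)
  hence "char_poly H = char_poly (mat_adjoint W * H * W)" by (simp add: char_poly_similar)
  also have "\<dots> = char_poly (mat 1 1 (\<lambda>_. e)) * char_poly A"
    unfolding blk by (rule char_poly_four_block_zeros_col) (use A in auto)
  also have "char_poly (mat 1 1 (\<lambda>_. e)) = [:-e,1:]" by (simp add: char_poly_defs det_def sign_def)
  finally have "char_poly A = (\<Prod>e\<leftarrow>es. [:-e,1:])" unfolding cp
    by (metis mult_cancel_left pCons_eq_0_iff zero_neq_one)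
  from Cons.IH[OF A this] obtain U where U: "unitary n' U"
    and D: "mat_adjoint U * A * U = mat_diag n' (\<lambda>i. es ! i)" by blast
  define E where "E = four_block_mat (1\<^sub>m 1) (0\<^sub>m 1 n') (0\<^sub>m n' 1) U"
  have E: "unitary n E" unfolding E_def n by (rule unitary_one_block[OF U])
  have "mat_adjoint (W * E) * H * (W * E) = mat_adjoint E * (mat_adjoint W * H * W) * E"
    using w unitaryD(1)[OF E] Cons(2)
    by (simp add: mat_adjoint_mult[of W n n E n] assoc_mult_mat[of _ n n _ n _ n] mult_carrier_mat[of _ n n _ n])
  also have "\<dots> = four_block_mat (mat 1 1 (\<lambda>_. e)) (0\<^sub>m 1 n') (0\<^sub>m n' 1) (mat_adjoint U * A * U)"
    unfolding blk E_def by (rule one_block_conj[OF unitaryD(1)[OF U] A(1)])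
  also have "\<dots> = mat_diag n (\<lambda>i. (e # es) ! i)"
    unfolding D by (rule eq_matI) (auto simp: mat_diag_def n nth_Cons')
  finally show ?case using unitary_mult[OF W E] by blast
qed

section \<open>Singular values\<close>

definition singular_values_spec :: "complex mat \<Rightarrow> real list \<Rightarrow> bool" where
  "singular_values_spec A \<sigma> \<longleftrightarrow> length \<sigma> = dim_col A \<and> sorted_wrt (\<ge>) \<sigma> \<and> (\<forall>s\<in>set \<sigma>. 0 \<le> s) \<and>
     char_poly (mat_adjoint A * A) = (\<Prod>s\<leftarrow>\<sigma>. [:- complex_of_real (s\<^sup>2), 1:])"

lemma sorted_wrt_ge_mset_unique:
  fixes xs ys :: "'a :: linorder list"
  assumes "sorted_wrt (\<ge>) xs" "sorted_wrt (\<ge>) ys" "mset xs = mset ys"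
  shows "xs = ys"
proof -
  have "sorted (rev xs)" "sorted (rev ys)" using assms(1,2) by (simp_all add: sorted_wrt_rev)
  hence "rev xs = rev ys" using assms(3) by (metis mset_rev properties_for_sort)
  thus ?thesis by simp
qed

lemma linear_factors_eq_imp_mset_eq:
  fixes xs ys :: "'a :: idom list"
  assumes "(\<Prod>x\<leftarrow>xs. [:- x, 1:]) = (\<Prod>y\<leftarrow>ys. [:- y, 1:])"
  shows "mset xs = mset ys"
  using assms
proof (induction xs arbitrary: ys)
  case Nil
  thus ?case using degree_linear_factors[of uminus ys] by simp
next
  case (Cons x xs)
  have "poly (\<Prod>y\<leftarrow>ys. [:- y, 1:]) x = 0" unfolding Cons(2)[symmetric] by simp
  hence x: "x \<in> set ys" by (auto simp: poly_prod_list_zero_iff)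
  hence "[:- x, 1:] * (\<Prod>y\<leftarrow>xs. [:- y, 1:]) = [:- x, 1:] * (\<Prod>y\<leftarrow>remove1 x ys. [:- y, 1:])"
    using Cons(2) by (simp add: prod_list_map_remove1[of x ys])
  hence "mset xs = mset (remove1 x ys)" by (intro Cons.IH) (metis mult_cancel_left pCons_eq_0_iff zero_neq_one)
  thus ?case using x by simp
qed

lemma singular_values_spec_unique:
  assumes "singular_values_spec A \<sigma>" "singular_values_spec A \<tau>"
  shows "\<sigma> = \<tau>"
proof -
  let ?sq = "\<lambda>s. complex_of_real (s\<^sup>2)"
  have "(\<Prod>e\<leftarrow>map ?sq \<sigma>. [:- e, 1:]) = (\<Prod>e\<leftarrow>map ?sq \<tau>. [:- e, 1:])"
    using assms unfolding singular_values_spec_def by (simp add: o_def)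
  hence "mset (map ?sq \<sigma>) = mset (map ?sq \<tau>)" by (rule linear_factors_eq_imp_mset_eq)
  hence "image_mset (\<lambda>z. sqrt (Re z)) (image_mset ?sq (mset \<sigma>)) =
      image_mset (\<lambda>z. sqrt (Re z)) (image_mset ?sq (mset \<tau>))" by simp
  hence "image_mset abs (mset \<sigma>) = image_mset abs (mset \<tau>)"
    by (simp add: multiset.map_comp o_def)
  moreover have "image_mset abs (mset xs) = mset xs" if "\<forall>s\<in>set xs. 0 \<le> s" for xs :: "real list"
    using that by (induct xs) auto
  ultimately have "mset \<sigma> = mset \<tau>" using assms unfolding singular_values_spec_def by metis
  thus ?thesis using sorted_wrt_ge_mset_unique assms unfolding singular_values_spec_def by blast
qed

text \<open>The eigenvalues of \<open>A\<^sup>H A\<close> are the squared column norms of \<open>A U\<close> for a diagonalizing \<open>U\<close>.\<close>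
lemma singular_values_spec_exists:
  assumes A: "A \<in> carrier_mat n n"
  shows "\<exists>\<sigma>. singular_values_spec A \<sigma>"
proof -
  let ?H = "mat_adjoint A * A"
  have H: "?H \<in> carrier_mat n n" using A by auto
  obtain es where es: "char_poly ?H = (\<Prod>a\<leftarrow>es. [:- a, 1:])" "length es = n"
    using char_poly_factorized[OF H] by blast
  obtain U where U: "unitary n U" and D: "mat_adjoint U * ?H * U = mat_diag n (\<lambda>i. es ! i)"
    using hermitian_unitarily_diagonalizable[OF H hermitian_adjoint_mult_self[OF A] es(1)] by blast
  note u = unitaryD[OF U]
  define lam where "lam = map Re es"
  have es_nth: "es ! i = complex_of_real (\<Sum>k<n. (cmod ((A * U) $$ (k,i)))\<^sup>2)" if i: "i < n" for i
  proof -
    have "es ! i = (mat_adjoint (A * U) * (A * U)) $$ (i,i)"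
      unfolding adjoint_mult_self_mult[OF A u(1)] D using i by (simp add: mat_diag_def)
    thus ?thesis using adjoint_mult_self_diag[of "A * U" n n i] A u(1) i by simp
  qed
  have es_lam: "es = map complex_of_real lam"
    by (rule nth_equalityI) (use es_nth es(2) in \<open>auto simp: lam_def\<close>)
  have lam_nonneg: "\<forall>x\<in>set lam. 0 \<le> x"
    using es_nth es(2) by (auto simp: lam_def in_set_conv_nth intro!: sum_nonneg)
  define \<sigma> where "\<sigma> = map sqrt (rev (sort lam))"
  have "map (\<lambda>s. [:- complex_of_real (s\<^sup>2), 1:]) \<sigma> =
      map (\<lambda>x. [:- complex_of_real x, 1:]) (rev (sort lam))"
    unfolding \<sigma>_def using lam_nonneg by (auto simp del: of_real_power)
  hence "char_poly ?H = (\<Prod>s\<leftarrow>\<sigma>. [:- complex_of_real (s\<^sup>2), 1:])"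
    unfolding es(1) es_lam by (simp add: o_def prod_mset_prod_list[symmetric])
  moreover have "sorted_wrt (\<ge>) \<sigma>"
    unfolding \<sigma>_def by (simp add: sorted_wrt_map sorted_wrt_rev sorted_wrt_mono_rel[of _ "(\<ge>)"])
  ultimately have "singular_values_spec A \<sigma>"
    using A es(2) lam_nonneg unfolding singular_values_spec_def \<sigma>_def lam_def by auto
  thus ?thesis by blast
qed

lemma singular_values_spec_singular_values:
  assumes "A \<in> carrier_mat n n"
  shows "singular_values_spec A (singular_values A)"
proof -
  have "\<exists>!\<sigma>. singular_values_spec A \<sigma>"
    using singular_values_spec_exists[OF assms] singular_values_spec_unique by blast
  thus ?thesis unfolding singular_values_def singular_values_spec_def[abs_def] by (rule theI')
qed

lemma
  assumes "A \<in> carrier_mat n n"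
  shows length_singular_values: "length (singular_values A) = n"
    and sorted_singular_values: "sorted_wrt (\<ge>) (singular_values A)"
    and singular_values_nonneg: "\<forall>s\<in>set (singular_values A). 0 \<le> s"
  using singular_values_spec_singular_values[OF assms] assms unfolding singular_values_spec_def by auto

lemma unitary_diagonalizes_adjoint_mult_self:
  assumes A: "A \<in> carrier_mat n n"
  shows "\<exists>Q. unitary n Q \<and> mat_adjoint Q * (mat_adjoint A * A) * Q =
    mat_diag n (\<lambda>i. complex_of_real ((singular_values A ! i)\<^sup>2))"
proof -
  have "char_poly (mat_adjoint A * A) =
      (\<Prod>e\<leftarrow>map (\<lambda>s. complex_of_real (s\<^sup>2)) (singular_values A). [:- e, 1:])"
    using singular_values_spec_singular_values[OF A] unfolding singular_values_spec_def by (simp add: o_def)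
  moreover have "mat_diag n (\<lambda>i. map (\<lambda>s. complex_of_real (s\<^sup>2)) (singular_values A) ! i) =
      mat_diag n (\<lambda>i. complex_of_real ((singular_values A ! i)\<^sup>2))"
    by (rule eq_matI) (auto simp: mat_diag_def length_singular_values[OF A])
  moreover have "mat_adjoint A * A \<in> carrier_mat n n" using A by auto
  ultimately show ?thesis
    using hermitian_unitarily_diagonalizable[OF _ hermitian_adjoint_mult_self[OF A]] by metis
qed

lemma singular_values_unitary_conj:
  assumes V: "unitary n V" and M: "M \<in> carrier_mat n n"
  shows "singular_values (V * M * mat_adjoint V) = singular_values M"
proof -
  note v = unitaryD[OF V]
  have cancel: "mat_adjoint V * (V * B) = B" if "B \<in> carrier_mat n n" for B
    using v that by (simp add: assoc_mult_mat[of _ n n _ n _ n, symmetric])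
  have "mat_adjoint (V * M * mat_adjoint V) * (V * M * mat_adjoint V) =
      V * (mat_adjoint M * M) * mat_adjoint V"
    using v M by (simp add: mat_adjoint_mult[of _ n n _ n] assoc_mult_mat[of _ n n _ n _ n]
        mult_carrier_mat[of _ n n _ n] cancel)
  moreover have "similar_mat (V * (mat_adjoint M * M) * mat_adjoint V) (mat_adjoint M * M)"
    unfolding similar_mat_def similar_mat_wit_def Let_def
    by (intro exI[of _ V] exI[of _ "mat_adjoint V"]) (use v M in auto)
  ultimately show ?thesis
    unfolding singular_values_def using v M by (simp add: char_poly_similar)
qed

lemma index_mult_mat_diag:
  "P \<in> carrier_mat n m \<Longrightarrow> l < n \<Longrightarrow> i < m \<Longrightarrow> (P * mat_diag m f) $$ (l,i) = P $$ (l,i) * f i"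
  by (simp add: mat_diag_mult_right)

lemma orthogonal_columns_factor:
  assumes G: "G \<in> carrier_mat n n"
    and GG: "mat_adjoint G * G = mat_diag n (\<lambda>i. complex_of_real ((\<sigma> ! i)\<^sup>2))"
  defines "P \<equiv> mat n n (\<lambda>(l,i). if \<sigma> ! i = 0 then 0 else G $$ (l,i) / complex_of_real (\<sigma> ! i))"
  shows "mat_adjoint P * P = mat_diag n (\<lambda>i. if \<sigma> ! i = 0 then 0 else 1)"
    and "G = P * mat_diag n (\<lambda>i. complex_of_real (\<sigma> ! i))"
proof -
  have P: "P \<in> carrier_mat n n" unfolding P_def by simp
  have G_entries: "(\<Sum>l<n. cnj (G $$ (l,i)) * G $$ (l,k)) =
      (if i = k then complex_of_real ((\<sigma> ! i)\<^sup>2) else 0)" if "i < n" "k < n" for i k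
    using index_adjoint_mult[OF G G that, symmetric] that unfolding GG by (simp add: mat_diag_def)
  show "mat_adjoint P * P = mat_diag n (\<lambda>i. if \<sigma> ! i = 0 then 0 else 1)"
  proof (rule eq_matI)
    fix i k assume "i < dim_row (mat_diag n (\<lambda>i. if \<sigma> ! i = 0 then 0 else 1 :: complex))"
      "k < dim_col (mat_diag n (\<lambda>i. if \<sigma> ! i = 0 then 0 else 1 :: complex))"
    hence i: "i < n" and k: "k < n" by (auto simp: mat_diag_def)
    have "(mat_adjoint P * P) $$ (i,k) = (\<Sum>l<n. cnj (P $$ (l,i)) * P $$ (l,k))"
      by (rule index_adjoint_mult[OF P P i k])
    also have "\<dots> = (if \<sigma> ! i = 0 \<or> \<sigma> ! k = 0 then 0 else
        (\<Sum>l<n. cnj (G $$ (l,i)) * G $$ (l,k)) / (complex_of_real (\<sigma> ! i) * complex_of_real (\<sigma> ! k)))"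
      using i k by (auto simp: P_def sum_divide_distrib intro: sum.cong)
    also have "\<dots> = mat_diag n (\<lambda>i. if \<sigma> ! i = 0 then 0 else 1) $$ (i,k)"
      unfolding G_entries[OF i k] using i k by (auto simp: mat_diag_def power2_eq_square)
    finally show "(mat_adjoint P * P) $$ (i,k) = mat_diag n (\<lambda>i. if \<sigma> ! i = 0 then 0 else 1) $$ (i,k)" .
  qed (use P in \<open>auto simp: mat_diag_def\<close>)
  show "G = P * mat_diag n (\<lambda>i. complex_of_real (\<sigma> ! i))"
  proof (rule eq_matI)
    fix l i assume "l < dim_row (P * mat_diag n (\<lambda>i. complex_of_real (\<sigma> ! i)))"
      "i < dim_col (P * mat_diag n (\<lambda>i. complex_of_real (\<sigma> ! i)))"
    hence l: "l < n" and i: "i < n" using P by (auto simp: mat_diag_def)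
    have "\<sigma> ! i = 0 \<Longrightarrow> G $$ (l,i) = 0"
      using adjoint_mult_self_diag_eq_0[OF G i l] GG i by (simp add: mat_diag_def)
    hence "P $$ (l,i) * complex_of_real (\<sigma> ! i) = G $$ (l,i)" using l i by (auto simp: P_def)
    thus "G $$ (l,i) = (P * mat_diag n (\<lambda>i. complex_of_real (\<sigma> ! i))) $$ (l,i)"
      by (simp add: index_mult_mat_diag[OF P l i])
  qed (use G P in \<open>auto simp: mat_diag_def\<close>)
qed

lemma singular_value_decomposition:
  assumes A: "A \<in> carrier_mat n n"
  defines "\<sigma> \<equiv> singular_values A"
  obtains Q P where "unitary n Q" "P \<in> carrier_mat n n"
    "mat_adjoint P * P = mat_diag n (\<lambda>i. if \<sigma> ! i = 0 then 0 else 1)"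
    "A * Q = P * mat_diag n (\<lambda>i. complex_of_real (\<sigma> ! i))"
proof -
  obtain Q where Q: "unitary n Q"
    and D: "mat_adjoint Q * (mat_adjoint A * A) * Q = mat_diag n (\<lambda>i. complex_of_real ((\<sigma> ! i)\<^sup>2))"
    using unitary_diagonalizes_adjoint_mult_self[OF A] unfolding \<sigma>_def by blast
  have AQ: "A * Q \<in> carrier_mat n n" using A unitaryD(1)[OF Q] by auto
  have "mat_adjoint (A * Q) * (A * Q) = mat_diag n (\<lambda>i. complex_of_real ((\<sigma> ! i)\<^sup>2))"
    unfolding adjoint_mult_self_mult[OF A unitaryD(1)[OF Q]] D ..
  note factor = orthogonal_columns_factor[OF AQ this]
  show ?thesis by (rule that[OF Q _ factor(1) factor(2)]) simp
qed

lemma partial_isometry_row_norm_le: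
  assumes P: "P \<in> carrier_mat n m" and PP: "mat_adjoint P * P = mat_diag m f"
    and f: "\<forall>i<m. f i = 0 \<or> f i = 1" and l: "l < n"
  shows "(\<Sum>i<m. (cmod (P $$ (l,i)))\<^sup>2) \<le> 1"
proof -
  have col0: "P $$ (l',i) = 0" if "l' < n" "i < m" "f i = 0" for l' i
    using adjoint_mult_self_diag_eq_0[OF P that(2,1)] that unfolding PP by (simp add: mat_diag_def)
  have PE: "P * mat_diag m f = P"
  proof (rule eq_matI)
    fix l' i assume "l' < dim_row P" "i < dim_col P"
    hence l': "l' < n" and i: "i < m" using P by auto
    have "(P * mat_diag m f) $$ (l',i) = P $$ (l',i) * f i" by (rule index_mult_mat_diag[OF P l' i])
    also have "\<dots> = P $$ (l',i)" using f col0[OF l' i] i by (cases "f i = 0") auto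
    finally show "(P * mat_diag m f) $$ (l',i) = P $$ (l',i)" .
  qed (use P in \<open>auto simp: mat_diag_def\<close>)
  define R where "R = P * mat_adjoint P"
  have R: "R \<in> carrier_mat n n" unfolding R_def using P by auto
  have PH: "mat_adjoint P \<in> carrier_mat m n" using P by auto
  have "R * R = P * (mat_adjoint P * (P * mat_adjoint P))"
    unfolding R_def using P PH by (intro assoc_mult_mat) auto
  also have "mat_adjoint P * (P * mat_adjoint P) = mat_adjoint P * P * mat_adjoint P"
    using P PH by (intro assoc_mult_mat[symmetric]) auto
  also have "P * (mat_adjoint P * P * mat_adjoint P) = P * (mat_adjoint P * P) * mat_adjoint P"
    using P PH by (intro assoc_mult_mat[symmetric]) auto
  also have "\<dots> = R" unfolding PP PE R_def ..
  moreover have "mat_adjoint R = R" unfolding R_def using P by (simp add: mat_adjoint_mult[of P n m _ n])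
  ultimately have RR: "mat_adjoint R * R = R" by simp
  define t where "t = (\<Sum>i<m. (cmod (P $$ (l,i)))\<^sup>2)"
  have Rll: "R $$ (l,l) = complex_of_real t"
    unfolding R_def t_def by (rule mult_adjoint_self_diag[OF P l])
  have "complex_of_real t = complex_of_real (\<Sum>s<n. (cmod (R $$ (s,l)))\<^sup>2)"
    using adjoint_mult_self_diag[OF R l] unfolding RR Rll .
  hence "t = (\<Sum>s<n. (cmod (R $$ (s,l)))\<^sup>2)" by (simp only: of_real_eq_iff)
  also have "\<dots> \<ge> (cmod (R $$ (l,l)))\<^sup>2"
    using member_le_sum[of l "{..<n}" "\<lambda>s. (cmod (R $$ (s,l)))\<^sup>2"] l by auto
  finally have "t\<^sup>2 \<le> t" unfolding Rll by simp
  moreover have "0 \<le> t" unfolding t_def by (intro sum_nonneg) auto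
  ultimately show ?thesis unfolding t_def[symmetric] by (auto simp: power2_eq_square intro: ccontr)
qed

section \<open>Ky Fan norms and pairings\<close>

lemma sum_mult_le_sum_take:
  fixes \<sigma> :: "real list" and c :: "nat \<Rightarrow> real"
  assumes sorted: "sorted_wrt (\<ge>) \<sigma>" and nonneg: "\<forall>s\<in>set \<sigma>. 0 \<le> s"
    and c: "\<forall>i<length \<sigma>. 0 \<le> c i \<and> c i \<le> 1" and c_sum: "(\<Sum>i<length \<sigma>. c i) \<le> real m"
  shows "(\<Sum>i<length \<sigma>. \<sigma> ! i * c i) \<le> sum_list (take m \<sigma>)"
proof (cases "m < length \<sigma>")
  case False
  have "(\<Sum>i<length \<sigma>. \<sigma> ! i * c i) \<le> (\<Sum>i<length \<sigma>. \<sigma> ! i)"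
    using nonneg c by (intro sum_mono) (simp add: mult_left_le)
  also have "\<dots> = sum_list (take m \<sigma>)" using False by (simp add: sum_list_sum_nth atLeast0LessThan)
  finally show ?thesis .
next
  case True
  \<comment> \<open>compare \<open>c\<close> with the indicator of the first \<open>m\<close> indices, pivoting at \<open>t = \<sigma> ! m\<close>\<close>
  define L where "L = length \<sigma>"
  define t where "t = \<sigma> ! m"
  define ind :: "nat \<Rightarrow> real" where "ind i = of_bool (i < m)" for i
  have take_eq: "sum_list (take m \<sigma>) = (\<Sum>i<L. \<sigma> ! i * ind i)"
    unfolding sum_list_sum_nth using True
    by (intro sum.mono_neutral_cong_right[symmetric]) (auto simp: ind_def L_def atLeast0LessThan)
  have ind_sum: "(\<Sum>i<L. ind i) = real m"
    using sum.mono_neutral_cong_right[of "{..<L}" "{..<m}" ind "\<lambda>_. 1"] True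
    by (auto simp: ind_def L_def)
  have "(\<sigma> ! i - t) * (c i - ind i) \<le> 0" if "i < L" for i
  proof (cases "i < m")
    case True
    hence "t \<le> \<sigma> ! i" using sorted_wrt_nth_less[OF sorted True] \<open>m < length \<sigma>\<close> unfolding t_def by simp
    thus ?thesis using True c that unfolding ind_def L_def by (intro mult_nonneg_nonpos) auto
  next
    case False
    hence "\<sigma> ! i \<le> t"
      using sorted_wrt_nth_less[OF sorted, of m i] that unfolding t_def L_def by (cases "i = m") auto
    thus ?thesis using False c that unfolding ind_def L_def by (intro mult_nonpos_nonneg) auto
  qed
  hence "(\<Sum>i<L. (\<sigma> ! i - t) * (c i - ind i)) \<le> 0" by (intro sum_nonpos) auto
  moreover have "(\<Sum>i<L. (\<sigma> ! i - t) * (c i - ind i)) =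
      (\<Sum>i<L. \<sigma> ! i * c i) - (\<Sum>i<L. \<sigma> ! i * ind i) - t * ((\<Sum>i<L. c i) - (\<Sum>i<L. ind i))"
    by (simp add: algebra_simps sum_subtractf sum_distrib_left)
  moreover have "0 \<le> t" unfolding t_def using nonneg True by simp
  ultimately show ?thesis using c_sum take_eq ind_sum unfolding L_def
    by (smt (verit) mult_nonneg_nonpos)
qed

lemma norm_mult_cnj_le: "cmod (k * p * cnj q) \<le> cmod k * ((cmod p)\<^sup>2 + (cmod q)\<^sup>2) / 2"
proof -
  have "2 * cmod p * cmod q \<le> (cmod p)\<^sup>2 + (cmod q)\<^sup>2" by (rule sum_squares_bound)
  hence "cmod k * (2 * (cmod p * cmod q)) \<le> cmod k * ((cmod p)\<^sup>2 + (cmod q)\<^sup>2)"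
    by (intro mult_left_mono) auto
  thus ?thesis by (simp add: norm_mult)
qed

lemma norm_sum_mult_cnj_le_1:
  assumes "(\<Sum>i\<in>I. (cmod (a i))\<^sup>2) \<le> 1" "(\<Sum>i\<in>I. (cmod (b i))\<^sup>2) \<le> 1"
  shows "cmod (\<Sum>i\<in>I. a i * cnj (b i)) \<le> 1"
proof -
  have "cmod (\<Sum>i\<in>I. a i * cnj (b i)) \<le> (\<Sum>i\<in>I. cmod (1 * a i * cnj (b i)))"
    by (simp add: norm_sum)
  also have "\<dots> \<le> (\<Sum>i\<in>I. ((cmod (a i))\<^sup>2 + (cmod (b i))\<^sup>2) / 2)"
    using norm_mult_cnj_le[of 1] by (intro sum_mono) simp
  also have "\<dots> = ((\<Sum>i\<in>I. (cmod (a i))\<^sup>2) + (\<Sum>i\<in>I. (cmod (b i))\<^sup>2)) / 2"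
    by (simp add: sum.distrib add_divide_distrib sum_divide_distrib)
  also have "\<dots> \<le> 1" using assms by simp
  finally show ?thesis .
qed

lemma kernel_weights_le:
  fixes k :: "nat \<Rightarrow> nat \<Rightarrow> complex" and P Q :: "complex mat"
  assumes rows: "\<forall>r<N. (\<Sum>s<N. cmod (k r s)) \<le> 1" and cols: "\<forall>s<N. (\<Sum>r<N. cmod (k r s)) \<le> 1"
    and P_col: "\<forall>i<N. (\<Sum>l<N. (cmod (P $$ (l,i)))\<^sup>2) \<le> 1" and P_row: "\<forall>l<N. (\<Sum>i<N. (cmod (P $$ (l,i)))\<^sup>2) \<le> 1"
    and Q_col: "\<forall>i<N. (\<Sum>l<N. (cmod (Q $$ (l,i)))\<^sup>2) \<le> 1" and Q_row: "\<forall>l<N. (\<Sum>i<N. (cmod (Q $$ (l,i)))\<^sup>2) \<le> 1"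
  defines "c i \<equiv> \<Sum>r<N. \<Sum>s<N. cmod (k r s) * ((cmod (P $$ (s,i)))\<^sup>2 + (cmod (Q $$ (r,i)))\<^sup>2) / 2"
  shows "\<forall>i<N. c i \<le> 1" and "(\<Sum>i<N. c i) \<le> (\<Sum>r<N. \<Sum>s<N. cmod (k r s))"
proof -
  have c_split: "c i = (\<Sum>s<N. (cmod (P $$ (s,i)))\<^sup>2 * (\<Sum>r<N. cmod (k r s))) / 2 +
      (\<Sum>r<N. (cmod (Q $$ (r,i)))\<^sup>2 * (\<Sum>s<N. cmod (k r s))) / 2" for i
  proof -
    have "c i = (\<Sum>r<N. \<Sum>s<N. cmod (k r s) * (cmod (P $$ (s,i)))\<^sup>2) / 2 +
        (\<Sum>r<N. \<Sum>s<N. cmod (k r s) * (cmod (Q $$ (r,i)))\<^sup>2) / 2"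
      unfolding c_def by (simp add: sum.distrib add_divide_distrib distrib_left sum_divide_distrib)
    also have "(\<Sum>r<N. \<Sum>s<N. cmod (k r s) * (cmod (P $$ (s,i)))\<^sup>2) =
        (\<Sum>s<N. (cmod (P $$ (s,i)))\<^sup>2 * (\<Sum>r<N. cmod (k r s)))"
      unfolding sum_distrib_left by (subst sum.swap) (simp add: mult.commute)
    also have "(\<Sum>r<N. \<Sum>s<N. cmod (k r s) * (cmod (Q $$ (r,i)))\<^sup>2) =
        (\<Sum>r<N. (cmod (Q $$ (r,i)))\<^sup>2 * (\<Sum>s<N. cmod (k r s)))"
      unfolding sum_distrib_left by (simp add: mult.commute)
    finally show ?thesis .
  qed
  show "\<forall>i<N. c i \<le> 1"
  proof (intro allI impI)
    fix i assume i: "i < N"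
    have "(\<Sum>s<N. (cmod (P $$ (s,i)))\<^sup>2 * (\<Sum>r<N. cmod (k r s))) \<le> (\<Sum>s<N. (cmod (P $$ (s,i)))\<^sup>2)"
      using cols by (intro sum_mono) (simp add: mult_left_le)
    moreover have "(\<Sum>r<N. (cmod (Q $$ (r,i)))\<^sup>2 * (\<Sum>s<N. cmod (k r s))) \<le> (\<Sum>r<N. (cmod (Q $$ (r,i)))\<^sup>2)"
      using rows by (intro sum_mono) (simp add: mult_left_le)
    ultimately show "c i \<le> 1" unfolding c_split using P_col Q_col i by fastforce
  qed
  have "(\<Sum>i<N. c i) = (\<Sum>r<N. \<Sum>s<N. cmod (k r s) *
      ((\<Sum>i<N. (cmod (P $$ (s,i)))\<^sup>2) + (\<Sum>i<N. (cmod (Q $$ (r,i)))\<^sup>2)) / 2)"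
  proof -
    have "(\<Sum>i<N. c i) = (\<Sum>r<N. \<Sum>s<N. \<Sum>i<N.
        cmod (k r s) * ((cmod (P $$ (s,i)))\<^sup>2 + (cmod (Q $$ (r,i)))\<^sup>2) / 2)"
      unfolding c_def by (subst sum.swap) (intro sum.cong refl sum.swap)
    thus ?thesis by (simp add: sum.distrib flip: sum_divide_distrib sum_distrib_left)
  qed
  also have "\<dots> \<le> (\<Sum>r<N. \<Sum>s<N. cmod (k r s) * (1 + 1) / 2)"
    using P_row Q_row by (intro sum_mono divide_right_mono mult_left_mono add_mono) auto
  finally show "(\<Sum>i<N. c i) \<le> (\<Sum>r<N. \<Sum>s<N. cmod (k r s))" by simp
qed

lemma svd_column_norm:
  assumes P: "P \<in> carrier_mat n n"
    and PP: "mat_adjoint P * P = mat_diag n (\<lambda>i. if \<sigma> ! i = 0 then 0 else 1)" and i: "i < n"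
  shows "(\<Sum>l<n. (cmod (P $$ (l,i)))\<^sup>2) = (if \<sigma> ! i = 0 then 0 else 1)"
proof -
  have "complex_of_real (\<Sum>l<n. (cmod (P $$ (l,i)))\<^sup>2) = (if \<sigma> ! i = 0 then 0 else 1)"
    using adjoint_mult_self_diag[OF P i] i unfolding PP by (simp add: mat_diag_def del: of_real_sum of_real_power)
  thus ?thesis by (cases "\<sigma> ! i = 0") (auto simp del: of_real_sum of_real_power)
qed

lemma svd_entry:
  assumes A: "A \<in> carrier_mat n n" and Q: "unitary n Q" and P: "P \<in> carrier_mat n n"
    and AQ: "A * Q = P * mat_diag n (\<lambda>i. complex_of_real (\<sigma> ! i))" and s: "s < n" and r: "r < n"
  shows "A $$ (s,r) = (\<Sum>i<n. complex_of_real (\<sigma> ! i) * P $$ (s,i) * cnj (Q $$ (r,i)))"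
proof -
  note q = unitaryD[OF Q]
  let ?D = "mat_diag n (\<lambda>i. complex_of_real (\<sigma> ! i))"
  have PD: "P * ?D \<in> carrier_mat n n" using P by simp
  have "A = A * Q * mat_adjoint Q" using A q by (simp add: assoc_mult_mat[of _ n n _ n _ n])
  hence "A $$ (s,r) = (P * ?D * mat_adjoint Q) $$ (s,r)" unfolding AQ by simp
  also have "\<dots> = (\<Sum>i<n. (P * ?D) $$ (s,i) * cnj (Q $$ (r,i)))"
    using PD q s r by (subst index_mult_sum[OF PD]) auto
  also have "\<dots> = (\<Sum>i<n. complex_of_real (\<sigma> ! i) * P $$ (s,i) * cnj (Q $$ (r,i)))"
    using P s by (intro sum.cong refl) (simp add: index_mult_mat_diag[OF P] mult_ac)
  finally show ?thesis .
qed

lemma norm_pairing_le_ky_fan_norm: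
  fixes k :: "nat \<Rightarrow> nat \<Rightarrow> complex"
  assumes A: "A \<in> carrier_mat N N"
    and rows: "\<forall>r<N. (\<Sum>s<N. cmod (k r s)) \<le> 1" and cols: "\<forall>s<N. (\<Sum>r<N. cmod (k r s)) \<le> 1"
    and total: "(\<Sum>r<N. \<Sum>s<N. cmod (k r s)) \<le> real m"
  shows "cmod (\<Sum>r<N. \<Sum>s<N. k r s * A $$ (s,r)) \<le> ky_fan_norm m A"
proof -
  define \<sigma> where "\<sigma> = singular_values A"
  have len: "length \<sigma> = N" and sorted: "sorted_wrt (\<ge>) \<sigma>" and nonneg: "\<forall>s\<in>set \<sigma>. 0 \<le> s"
    using length_singular_values[OF A] sorted_singular_values[OF A] singular_values_nonneg[OF A]
    unfolding \<sigma>_def by auto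
  obtain Q P where Q: "unitary N Q" and P: "P \<in> carrier_mat N N"
    and PP: "mat_adjoint P * P = mat_diag N (\<lambda>i. if \<sigma> ! i = 0 then 0 else 1)"
    and AQ: "A * Q = P * mat_diag N (\<lambda>i. complex_of_real (\<sigma> ! i))"
    using singular_value_decomposition[OF A] unfolding \<sigma>_def by blast
  define z where "z i = (\<Sum>r<N. \<Sum>s<N. k r s * P $$ (s,i) * cnj (Q $$ (r,i)))" for i
  define c where "c i = (\<Sum>r<N. \<Sum>s<N. cmod (k r s) * ((cmod (P $$ (s,i)))\<^sup>2 + (cmod (Q $$ (r,i)))\<^sup>2) / 2)" for i
  have c_nonneg: "\<forall>i. 0 \<le> c i" unfolding c_def by (auto intro!: sum_nonneg)
  have "\<forall>l<N. (\<Sum>i<N. (cmod (P $$ (l,i)))\<^sup>2) \<le> 1"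
    using partial_isometry_row_norm_le[OF P PP] by auto
  hence c_le: "\<forall>i<N. c i \<le> 1" and c_sum: "(\<Sum>i<N. c i) \<le> (\<Sum>r<N. \<Sum>s<N. cmod (k r s))"
    using kernel_weights_le[OF rows cols, of P Q] svd_column_norm[OF P PP]
      unitary_col_norm[OF Q] unitary_row_norm[OF Q] unfolding c_def by auto
  have "(\<Sum>r<N. \<Sum>s<N. k r s * A $$ (s,r)) =
      (\<Sum>r<N. \<Sum>s<N. \<Sum>i<N. complex_of_real (\<sigma> ! i) * (k r s * P $$ (s,i) * cnj (Q $$ (r,i))))"
    using svd_entry[OF A Q P AQ] by (intro sum.cong refl) (simp add: sum_distrib_left mult_ac)
  also have "\<dots> = (\<Sum>i<N. complex_of_real (\<sigma> ! i) * z i)"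
    unfolding z_def sum_distrib_left by (subst sum.swap) (intro sum.cong refl sum.swap)
  finally have "cmod (\<Sum>r<N. \<Sum>s<N. k r s * A $$ (s,r)) \<le> (\<Sum>i<N. cmod (complex_of_real (\<sigma> ! i) * z i))"
    by (simp only: norm_sum)
  also have "\<dots> \<le> (\<Sum>i<N. \<sigma> ! i * c i)"
  proof (intro sum_mono)
    fix i assume "i \<in> {..<N}"
    have "cmod (z i) \<le> (\<Sum>r<N. \<Sum>s<N. cmod (k r s * P $$ (s,i) * cnj (Q $$ (r,i))))"
      unfolding z_def by (rule order_trans[OF norm_sum sum_mono[OF norm_sum]])
    also have "\<dots> \<le> c i" unfolding c_def by (intro sum_mono norm_mult_cnj_le)
    finally show "cmod (complex_of_real (\<sigma> ! i) * z i) \<le> \<sigma> ! i * c i"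
      using nonneg len \<open>i \<in> {..<N}\<close> by (simp add: norm_mult mult_left_mono)
  qed
  also have "\<dots> \<le> sum_list (take m \<sigma>)"
    using sum_mult_le_sum_take[OF sorted nonneg, of c m] c_le c_nonneg c_sum total len by auto
  finally show ?thesis unfolding ky_fan_norm_def \<sigma>_def .
qed

text \<open>The trace norm is attained by pairing with \<open>Q P\<^sup>H\<close>, where \<open>A Q = P \<Sigma>\<close> is an SVD.\<close>
lemma trace_norm_eq_pairing:
  assumes Z: "Z \<in> carrier_mat n n"
  obtains w where "\<forall>x<n. \<forall>y<n. cmod (w x y) \<le> 1"
    "complex_of_real (trace_norm Z) = (\<Sum>x<n. \<Sum>y<n. w x y * Z $$ (y,x))"
proof -
  define \<sigma> where "\<sigma> = singular_values Z"
  have len: "length \<sigma> = n" using length_singular_values[OF Z] unfolding \<sigma>_def .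
  obtain Q P where Q: "unitary n Q" and P: "P \<in> carrier_mat n n"
    and PP: "mat_adjoint P * P = mat_diag n (\<lambda>i. if \<sigma> ! i = 0 then 0 else 1)"
    and ZQ: "Z * Q = P * mat_diag n (\<lambda>i. complex_of_real (\<sigma> ! i))"
    using singular_value_decomposition[OF Z] unfolding \<sigma>_def by blast
  note q = unitaryD[OF Q]
  define w where "w x y = (\<Sum>i<n. Q $$ (x,i) * cnj (P $$ (y,i)))" for x y
  have "cmod (w x y) \<le> 1" if x: "x < n" and y: "y < n" for x y
    unfolding w_def using unitary_row_norm[OF Q x] partial_isometry_row_norm_le[OF P PP _ y]
    by (intro norm_sum_mult_cnj_le_1) auto
  moreover have "(\<Sum>x<n. \<Sum>y<n. w x y * Z $$ (y,x)) = complex_of_real (trace_norm Z)"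
  proof -
    have ZQ_entry: "(\<Sum>x<n. Z $$ (y,x) * Q $$ (x,i)) = complex_of_real (\<sigma> ! i) * P $$ (y,i)"
      if "y < n" "i < n" for y i
      using arg_cong[OF ZQ, of "\<lambda>M. M $$ (y,i)"] index_mult_sum[OF Z q(1) that]
        index_mult_mat_diag[OF P that] by (simp add: mult.commute)
    have "(\<Sum>x<n. \<Sum>y<n. w x y * Z $$ (y,x)) =
        (\<Sum>x<n. \<Sum>i<n. \<Sum>y<n. cnj (P $$ (y,i)) * (Z $$ (y,x) * Q $$ (x,i)))"
      unfolding w_def sum_distrib_right by (rule sum.cong[OF refl], subst sum.swap, simp add: mult_ac)
    also have "\<dots> = (\<Sum>i<n. \<Sum>x<n. \<Sum>y<n. cnj (P $$ (y,i)) * (Z $$ (y,x) * Q $$ (x,i)))"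
      by (rule sum.swap)
    also have "\<dots> = (\<Sum>i<n. \<Sum>y<n. cnj (P $$ (y,i)) * (\<Sum>x<n. Z $$ (y,x) * Q $$ (x,i)))"
      unfolding sum_distrib_left by (intro sum.cong refl sum.swap)
    also have "\<dots> = (\<Sum>i<n. \<Sum>y<n. complex_of_real (\<sigma> ! i) * (cnj (P $$ (y,i)) * P $$ (y,i)))"
      by (intro sum.cong refl) (subst ZQ_entry, auto simp: mult_ac)
    also have "\<dots> = (\<Sum>i<n. complex_of_real (\<sigma> ! i * (\<Sum>y<n. (cmod (P $$ (y,i)))\<^sup>2)))"
      by (simp add: cnj_mult_self sum_distrib_left)
    also have "\<dots> = (\<Sum>i<n. complex_of_real (\<sigma> ! i))"
      by (intro sum.cong refl) (simp add: svd_column_norm[OF P PP])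
    also have "\<dots> = complex_of_real (trace_norm Z)"
      unfolding trace_norm_def \<sigma>_def[symmetric] using len
      by (simp add: sum_list_sum_nth atLeast0LessThan)
    finally show ?thesis .
  qed
  ultimately show ?thesis using that by (metis (no_types, lifting))
qed

section \<open>Modes of bipartite operators\<close>

definition LAB_eigenvalue :: "nat \<Rightarrow> nat \<Rightarrow> nat" where
  "LAB_eigenvalue d r = r div d + r mod d"

lemma LAB_eigenvalue_pair: "b < d \<Longrightarrow> LAB_eigenvalue d (a * d + b) = a + b"
  unfolding LAB_eigenvalue_def by simp

lemma LAB_eigenvalue_range:
  assumes "r < d * d"
  shows "int (LAB_eigenvalue d r) \<in> {0..2 * int d - 2}"
proof -
  have "d > 0" using assms by (cases d) auto
  hence "r div d < d" "r mod d < d" using assms by (auto simp: less_mult_imp_div_less)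
  hence "LAB_eigenvalue d r + 2 \<le> 2 * d" unfolding LAB_eigenvalue_def by linarith
  thus ?thesis by auto
qed

lemma LAB_eq_mat_diag: "LAB d = mat_diag (d * d) (\<lambda>r. of_nat (LAB_eigenvalue d r))"
  unfolding LAB_def LAB_eigenvalue_def mat_diag_def by (rule eq_matI) auto

lemma PiAB_eq_mat_diag: "PiAB d c = mat_diag (d * d) (\<lambda>r. of_bool (int (LAB_eigenvalue d r) = c))"
  unfolding PiAB_def LAB_eigenvalue_def mat_diag_def by (rule eq_matI) auto

lemma commutes_LAB_imp_block_diagonal:
  assumes V: "V \<in> carrier_mat (d * d) (d * d)" and comm: "V * LAB d = LAB d * V"
    and r: "r < d * d" and s: "s < d * d" and nz: "V $$ (r,s) \<noteq> 0"
  shows "LAB_eigenvalue d r = LAB_eigenvalue d s"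
proof -
  have "V $$ (r,s) * of_nat (LAB_eigenvalue d s) = of_nat (LAB_eigenvalue d r) * V $$ (r,s)"
    using arg_cong[OF comm, of "\<lambda>M. M $$ (r,s)"] V r s
    by (simp add: LAB_eq_mat_diag mat_diag_mult_left mat_diag_mult_right)
  thus ?thesis using nz by (simp add: mult.commute)
qed

lemma mode2_eq_mat:
  assumes X: "X \<in> carrier_mat (d * d) (d * d)"
  shows "mode2 d j X = mat (d * d) (d * d)
    (\<lambda>(r,s). if int (LAB_eigenvalue d r) = int (LAB_eigenvalue d s) + j then X $$ (r,s) else 0)"
proof -
  let ?ev = "\<lambda>r. int (LAB_eigenvalue d r)"
  have PiXPi: "PiAB d (c + j) * X * PiAB d c = mat (d * d) (d * d)
      (\<lambda>(r,s). if ?ev r = c + j \<and> ?ev s = c then X $$ (r,s) else 0)" for c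
    using X unfolding PiAB_eq_mat_diag by (subst mat_diag_mult_right) (auto simp: mat_diag_mult_left)
  have fold: "foldr (\<lambda>c acc. PiAB d (c + j) * X * PiAB d c + acc) cs (0\<^sub>m (d * d) (d * d)) =
      mat (d * d) (d * d) (\<lambda>(r,s). \<Sum>c\<leftarrow>cs. if ?ev r = c + j \<and> ?ev s = c then X $$ (r,s) else 0)" for cs
    by (induction cs) (auto simp: PiXPi)
  have "(\<Sum>c\<leftarrow>[0..2 * int d - 2]. if ?ev r = c + j \<and> ?ev s = c then X $$ (r,s) else 0) =
      (if ?ev r = ?ev s + j then X $$ (r,s) else 0)" if "s < d * d" for r s
  proof -
    have "(\<Sum>c\<leftarrow>[0..2 * int d - 2]. if ?ev r = c + j \<and> ?ev s = c then X $$ (r,s) else 0) =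
        (\<Sum>c\<in>{0..2 * int d - 2}. if c = ?ev s then (if ?ev r = ?ev s + j then X $$ (r,s) else 0) else 0)"
      by (subst sum_list_distinct_conv_sum_set[OF distinct_upto], unfold set_upto)
        (intro sum.cong refl, auto)
    thus ?thesis using LAB_eigenvalue_range[OF that] by (simp only: sum.delta) simp
  qed
  thus ?thesis unfolding mode2_def fold by (intro eq_matI) auto
qed

lemma mode2_carrier: "X \<in> carrier_mat (d * d) (d * d) \<Longrightarrow> mode2 d j X \<in> carrier_mat (d * d) (d * d)"
  by (simp add: mode2_eq_mat)

lemma mode2_mode2: "X \<in> carrier_mat (d * d) (d * d) \<Longrightarrow> mode2 d j (mode2 d j X) = mode2 d j X"
  by (rule eq_matI) (auto simp: mode2_eq_mat)

lemma index_mult_mult_adjoint: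
  assumes V: "V \<in> carrier_mat n n" and B: "B \<in> carrier_mat n n" and s: "s < n" and r: "r < n"
  shows "(V * B * mat_adjoint V) $$ (s,r) = (\<Sum>t<n. \<Sum>u<n. V $$ (s,t) * B $$ (t,u) * cnj (V $$ (r,u)))"
proof -
  have VB: "V * B \<in> carrier_mat n n" using V B by auto
  have "(V * B * mat_adjoint V) $$ (s,r) = (\<Sum>u<n. (V * B) $$ (s,u) * cnj (V $$ (r,u)))"
    using V r by (subst index_mult_sum[OF VB _ s r]) auto
  also have "\<dots> = (\<Sum>u<n. \<Sum>t<n. V $$ (s,t) * B $$ (t,u) * cnj (V $$ (r,u)))"
    by (intro sum.cong refl) (simp add: index_mult_sum[OF V B s] sum_distrib_right)
  also have "\<dots> = (\<Sum>t<n. \<Sum>u<n. V $$ (s,t) * B $$ (t,u) * cnj (V $$ (r,u)))"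
    by (rule sum.swap)
  finally show ?thesis .
qed

lemma mode2_unitary_conj:
  assumes V: "V \<in> carrier_mat (d * d) (d * d)" and comm: "V * LAB d = LAB d * V"
    and X: "X \<in> carrier_mat (d * d) (d * d)"
  shows "mode2 d j (V * X * mat_adjoint V) = V * mode2 d j X * mat_adjoint V"
proof (rule eq_matI)
  let ?ev = "\<lambda>r. int (LAB_eigenvalue d r)"
  fix s r assume "s < dim_row (V * mode2 d j X * mat_adjoint V)" "r < dim_col (V * mode2 d j X * mat_adjoint V)"
  hence s: "s < d * d" and r: "r < d * d" using V by auto
  have VXV: "V * X * mat_adjoint V \<in> carrier_mat (d * d) (d * d)" using V X by auto
  have "mode2 d j (V * X * mat_adjoint V) $$ (s,r) =
      (\<Sum>t<d * d. \<Sum>u<d * d. if ?ev s = ?ev r + j then V $$ (s,t) * X $$ (t,u) * cnj (V $$ (r,u)) else 0)"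
    using s r by (cases "?ev s = ?ev r + j") (simp_all add: mode2_eq_mat[OF VXV] index_mult_mult_adjoint[OF V X])
  also have "\<dots> = (\<Sum>t<d * d. \<Sum>u<d * d. V $$ (s,t) * mode2 d j X $$ (t,u) * cnj (V $$ (r,u)))"
  proof (intro sum.cong refl)
    fix t u assume "t \<in> {..<d * d}" "u \<in> {..<d * d}"
    hence t: "t < d * d" and u: "u < d * d" by auto
    show "(if ?ev s = ?ev r + j then V $$ (s,t) * X $$ (t,u) * cnj (V $$ (r,u)) else 0) =
        V $$ (s,t) * mode2 d j X $$ (t,u) * cnj (V $$ (r,u))"
    proof (cases "V $$ (s,t) = 0 \<or> V $$ (r,u) = 0")
      case False
      hence "LAB_eigenvalue d s = LAB_eigenvalue d t" "LAB_eigenvalue d r = LAB_eigenvalue d u"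
        using commutes_LAB_imp_block_diagonal[OF V comm] s r t u by auto
      thus ?thesis using t u by (simp add: mode2_eq_mat[OF X])
    qed auto
  qed
  also have "\<dots> = (V * mode2 d j X * mat_adjoint V) $$ (s,r)"
    by (rule index_mult_mult_adjoint[OF V mode2_carrier[OF X] s r, symmetric])
  finally show "mode2 d j (V * X * mat_adjoint V) $$ (s,r) = (V * mode2 d j X * mat_adjoint V) $$ (s,r)" .
qed (use mode2_carrier[OF mult_carrier_mat[OF mult_carrier_mat[OF V X] mat_adjoint_carrier[OF V]]] V in auto)

lemma pair_index_less: "(a :: nat) < d \<Longrightarrow> b < d \<Longrightarrow> a * d + b < d * d"
proof -
  assume a: "a < d" and b: "b < d"
  have "a * d + b < (a + 1) * d" using b by simp
  also have "\<dots> \<le> d * d" using a by (intro mult_right_mono) auto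
  finally show ?thesis .
qed

lemma ptrace_B_mode2:
  assumes Y: "Y \<in> carrier_mat (d * d) (d * d)"
  shows "ptrace_B d (mode2 d j Y) = mode1 j (ptrace_B d Y)"
proof (rule eq_matI)
  fix a a' assume "a < dim_row (mode1 j (ptrace_B d Y))" "a' < dim_col (mode1 j (ptrace_B d Y))"
  hence a: "a < d" and a': "a' < d" by (auto simp: mode1_def ptrace_B_def)
  have "ptrace_B d (mode2 d j Y) $$ (a,a') =
      (\<Sum>b<d. if int a = int a' + j then Y $$ (a * d + b, a' * d + b) else 0)"
    using a a' by (auto simp: ptrace_B_def mode2_eq_mat[OF Y] LAB_eigenvalue_pair pair_index_less intro!: sum.cong)
  also have "\<dots> = mode1 j (ptrace_B d Y) $$ (a,a')"
    using a a' by (simp add: mode1_def ptrace_B_def)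
  finally show "ptrace_B d (mode2 d j Y) $$ (a,a') = mode1 j (ptrace_B d Y) $$ (a,a')" .
qed (auto simp: mode1_def ptrace_B_def)

section \<open>The dimension of \<open>V\<^sub>i\<^sub>n\<close>\<close>

lemma vector_space_opscale: "vector_space opscale"
  by unfold_locales (auto simp: opscale_def fun_eq_iff algebra_simps)

lemma sum_apply2: "finite T \<Longrightarrow> (\<Sum>v\<in>T. F v) r s = (\<Sum>v\<in>T. (F v r s :: complex))"
  by (induction T rule: finite_induct) auto

definition Vin_gen :: "nat \<Rightarrow> int \<Rightarrow> nat \<Rightarrow> nat \<Rightarrow> nat \<Rightarrow> nat \<Rightarrow> complex" where
  "Vin_gen d j n m = (\<lambda>r s. if r = nat (int n + j) * d + m \<and> s = n * d + m then 1 else 0)"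

definition Vin_index :: "nat \<Rightarrow> int \<Rightarrow> (nat \<times> nat) set" where
  "Vin_index d j = {(n,m). n < d \<and> m < d \<and> 0 \<le> int n + j \<and> int n + j < int d}"

lemma Vin_gens_eq_image: "Vin_gens d j = (\<lambda>(n,m). Vin_gen d j n m) ` Vin_index d j"
  unfolding Vin_gens_def Vin_index_def Vin_gen_def by auto

lemma finite_Vin_index: "finite (Vin_index d j)"
  by (rule finite_subset[of _ "{..<d} \<times> {..<d}"]) (auto simp: Vin_index_def)

lemma Vin_gen_at:
  assumes "m < d" "m' < d"
  shows "Vin_gen d j n' m' (nat (int n + j) * d + m) (n * d + m) = of_bool (n' = n \<and> m' = m)"
proof -
  have "n * d + m = n' * d + m' \<longleftrightarrow> n = n' \<and> m = m'"
  proof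
    assume e: "n * d + m = n' * d + m'"
    have "(n * d + m) div d = n" "(n' * d + m') div d = n'" "(n * d + m) mod d = m" "(n' * d + m') mod d = m'"
      using assms by auto
    thus "n = n' \<and> m = m'" using e by metis
  qed auto
  thus ?thesis unfolding Vin_gen_def by auto
qed

lemma Vin_gens_independent: "\<not> module.dependent opscale (Vin_gens d j)"
proof
  interpret vs: vector_space opscale by (rule vector_space_opscale)
  assume "vs.dependent (Vin_gens d j)"
  then obtain T u v0 where T: "finite T" "T \<subseteq> Vin_gens d j" and sum0: "(\<Sum>v\<in>T. opscale (u v) v) = 0"
    and v0: "v0 \<in> T" "u v0 \<noteq> 0" unfolding vs.dependent_explicit by blast
  obtain n m where nm: "(n,m) \<in> Vin_index d j" and v0_eq: "v0 = Vin_gen d j n m"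
    using T(2) v0(1) unfolding Vin_gens_eq_image by auto
  have m: "m < d" using nm unfolding Vin_index_def by auto
  let ?r = "nat (int n + j) * d + m" and ?s = "n * d + m"
  have v_at: "v ?r ?s = (if v = v0 then 1 else 0)" if "v \<in> T" for v
  proof -
    obtain n' m' where nm': "(n',m') \<in> Vin_index d j" and v_eq: "v = Vin_gen d j n' m'"
      using T(2) \<open>v \<in> T\<close> unfolding Vin_gens_eq_image by auto
    have m': "m' < d" using nm' unfolding Vin_index_def by auto
    have "v ?r ?s = of_bool (n' = n \<and> m' = m)" unfolding v_eq by (rule Vin_gen_at[OF m m'])
    moreover have "n' = n \<and> m' = m \<longleftrightarrow> v = v0"
    proof
      assume "v = v0"
      hence "Vin_gen d j n' m' ?r ?s = Vin_gen d j n m ?r ?s" unfolding v_eq v0_eq by simp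
      thus "n' = n \<and> m' = m" unfolding Vin_gen_at[OF m m'] Vin_gen_at[OF m m] by simp
    qed (simp add: v_eq v0_eq)
    ultimately show ?thesis by simp
  qed
  have "(\<Sum>v\<in>T. opscale (u v) v) ?r ?s = (\<Sum>v\<in>T. u v * v ?r ?s)"
    by (simp add: sum_apply2[OF T(1)] opscale_def)
  also have "\<dots> = (\<Sum>v\<in>T. if v = v0 then u v else 0)" by (intro sum.cong refl) (simp add: v_at)
  also have "\<dots> = u v0" using T(1) v0(1) by simp
  finally have "(\<Sum>v\<in>T. opscale (u v) v) ?r ?s = u v0" .
  thus False using sum0 v0(2) by simp
qed

lemma dj_eq_card: "dj d j = card (Vin_gens d j)"
  unfolding dj_def by (rule vector_space.dim_span_eq_card_independent[OF vector_space_opscale Vin_gens_independent])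

text \<open>Each basis index \<open>r = n d + m\<close> of \<open>AB\<close> whose shift \<open>n + j\<close> stays in range yields the generator \<open>|n+j,m\<rangle>\<langle>n,m|\<close>.\<close>
lemma card_shiftable_le_dj:
  "card {r. r < d * d \<and> 0 \<le> int (r div d) + j \<and> int (r div d) + j < int d} \<le> dj d j"
proof -
  let ?R = "{r. r < d * d \<and> 0 \<le> int (r div d) + j \<and> int (r div d) + j < int d}"
  let ?f = "\<lambda>r. Vin_gen d j (r div d) (r mod d)"
  have mod_less: "r mod d < d" if "r \<in> ?R" for r using that by (cases d) auto
  have "?f ` ?R \<subseteq> Vin_gens d j"
    unfolding Vin_gens_eq_image Vin_index_def using mod_less
    by (force simp: less_mult_imp_div_less)
  moreover have "inj_on ?f ?R"
  proof
    fix r r' assume r: "r \<in> ?R" and r': "r' \<in> ?R" and eq: "?f r = ?f r'"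
    let ?r = "nat (int (r div d) + j) * d + r mod d" and ?s = "r div d * d + r mod d"
    have "?f r ?r ?s = 1" by (subst Vin_gen_at[OF mod_less[OF r] mod_less[OF r]]) simp
    moreover have "?f r' ?r ?s = of_bool (r' div d = r div d \<and> r' mod d = r mod d)"
      by (rule Vin_gen_at[OF mod_less[OF r] mod_less[OF r']])
    ultimately have "r' div d = r div d \<and> r' mod d = r mod d" unfolding eq by simp
    thus "r = r'" by (metis div_mult_mod_eq)
  qed
  moreover have "finite (Vin_gens d j)" unfolding Vin_gens_eq_image using finite_Vin_index by simp
  ultimately show ?thesis unfolding dj_eq_card by (intro card_inj_on_le)
qed

text \<open>The kernel \<open>w \<otimes> 1\<^sub>B\<close> restricted to the \<open>j\<close>-th mode.\<close>
definition mode_kernel :: "nat \<Rightarrow> int \<Rightarrow> (nat \<Rightarrow> nat \<Rightarrow> complex) \<Rightarrow> nat \<Rightarrow> nat \<Rightarrow> complex" where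
  "mode_kernel d j w r s =
     (if r mod d = s mod d \<and> int (s div d) = int (r div d) + j then w (r div d) (s div d) else 0)"

lemma mode_kernel_pair:
  "b < d \<Longrightarrow> b' < d \<Longrightarrow>
   mode_kernel d j w (x * d + b) (y * d + b') = (if b' = b \<and> int y = int x + j then w x y else 0)"
  unfolding mode_kernel_def by auto

lemma sum_pair_index:
  fixes f :: "nat \<Rightarrow> 'a :: comm_monoid_add"
  shows "(\<Sum>r<m * d. f r) = (\<Sum>x<m. \<Sum>b<d. f (x * d + b))"
proof -
  have "(\<Sum>r<m * d. f r) = (\<Sum>x<m. sum f {x * d..<x * d + d})"
    using sum.nat_group[where g = f and k = d and n = m] by simp
  also have "\<dots> = (\<Sum>x<m. \<Sum>b<d. f (x * d + b))"
  proof (rule sum.cong[OF refl])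
    fix x
    have "sum f {0 + x * d..<d + x * d} = (\<Sum>b=0..<d. f (b + x * d))" by (rule sum.shift_bounds_nat_ivl)
    thus "sum f {x * d..<x * d + d} = (\<Sum>b<d. f (x * d + b))" by (simp add: atLeast0LessThan add.commute)
  qed
  finally show ?thesis .
qed

lemma pairing_mode_kernel:
  assumes A: "A \<in> carrier_mat (d * d) (d * d)"
  shows "(\<Sum>x<d. \<Sum>y<d. w x y * mode1 j (ptrace_B d A) $$ (y,x)) =
    (\<Sum>r<d * d. \<Sum>s<d * d. mode_kernel d j w r s * A $$ (s,r))"
proof -
  have "(\<Sum>r<d * d. \<Sum>s<d * d. mode_kernel d j w r s * A $$ (s,r)) =
      (\<Sum>x<d. \<Sum>b<d. \<Sum>y<d. \<Sum>b'<d. mode_kernel d j w (x * d + b) (y * d + b') * A $$ (y * d + b', x * d + b))"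
    by (simp only: sum_pair_index)
  also have "\<dots> = (\<Sum>x<d. \<Sum>b<d. \<Sum>y<d. if int y = int x + j then w x y * A $$ (y * d + b, x * d + b) else 0)"
    by (intro sum.cong refl) (simp add: mode_kernel_pair if_distrib[of "\<lambda>z. z * _"] cong: if_cong)
  also have "\<dots> = (\<Sum>x<d. \<Sum>y<d. \<Sum>b<d. if int y = int x + j then w x y * A $$ (y * d + b, x * d + b) else 0)"
    by (intro sum.cong refl sum.swap)
  also have "\<dots> = (\<Sum>x<d. \<Sum>y<d. w x y * mode1 j (ptrace_B d A) $$ (y,x))"
    by (intro sum.cong refl) (simp add: mode1_def ptrace_B_def sum_distrib_left)
  finally show ?thesis by simp
qed

lemma eq_of_div_mod_eq: "(a :: nat) div d = b div d \<Longrightarrow> a mod d = b mod d \<Longrightarrow> a = b"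
  by (metis div_mult_mod_eq)

lemma sum_le_1_if_unique_nonzero:
  fixes g :: "'a \<Rightarrow> real"
  assumes "finite S" "\<forall>y\<in>S. 0 \<le> g y \<and> g y \<le> 1"
    and unique: "\<forall>y\<in>S. \<forall>y'\<in>S. g y \<noteq> 0 \<longrightarrow> g y' \<noteq> 0 \<longrightarrow> y = y'"
  shows "sum g S \<le> 1"
proof (cases "\<exists>y\<in>S. g y \<noteq> 0")
  case True
  then obtain y0 where y0: "y0 \<in> S" "g y0 \<noteq> 0" by blast
  have "sum g S = g y0 + sum g (S - {y0})" using assms(1) y0(1) by (simp add: sum.remove)
  also have "sum g (S - {y0}) = 0" using unique y0 by (intro sum.neutral) blast
  finally show ?thesis using assms(2) y0(1) by simp
qed (simp add: sum.neutral)

lemma mode_kernel_row_sum: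
  assumes w: "\<forall>x<d. \<forall>y<d. cmod (w x y) \<le> 1" and r: "r < d * d"
  shows "(\<Sum>s<d * d. cmod (mode_kernel d j w r s)) \<le> of_bool (0 \<le> int (r div d) + j \<and> int (r div d) + j < int d)"
proof -
  have bound: "cmod (mode_kernel d j w r s) \<le> 1" if "s < d * d" for s
    using w r that by (auto simp: mode_kernel_def less_mult_imp_div_less)
  have "(\<Sum>s<d * d. cmod (mode_kernel d j w r s)) \<le> 1"
  proof (intro sum_le_1_if_unique_nonzero ballI impI)
    fix s s' assume "cmod (mode_kernel d j w r s) \<noteq> 0" "cmod (mode_kernel d j w r s') \<noteq> 0"
    hence "s div d = s' div d" "s mod d = s' mod d" by (auto simp: mode_kernel_def split: if_splits)
    thus "s = s'" by (rule eq_of_div_mod_eq)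
  qed (use bound in auto)
  moreover have "mode_kernel d j w r s = 0" if "s < d * d" "\<not> (0 \<le> int (r div d) + j \<and> int (r div d) + j < int d)" for s
  proof -
    have "s div d < d" using that(1) by (simp add: less_mult_imp_div_less)
    thus ?thesis using that by (auto simp: mode_kernel_def)
  qed
  ultimately show ?thesis by auto
qed

lemma mode_kernel_col_sum:
  assumes w: "\<forall>x<d. \<forall>y<d. cmod (w x y) \<le> 1" and s: "s < d * d"
  shows "(\<Sum>r<d * d. cmod (mode_kernel d j w r s)) \<le> 1"
proof (intro sum_le_1_if_unique_nonzero)
  show "\<forall>r\<in>{..<d * d}. 0 \<le> cmod (mode_kernel d j w r s) \<and> cmod (mode_kernel d j w r s) \<le> 1"
    using w s by (auto simp: mode_kernel_def less_mult_imp_div_less)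
qed (auto simp: mode_kernel_def intro: eq_of_div_mod_eq)

lemma Mj_ptrace_B_le_ky_fan_norm:
  assumes A: "A \<in> carrier_mat (d * d) (d * d)"
  shows "Mj j (ptrace_B d A) \<le> ky_fan_norm (dj d j) A"
proof -
  define Z where "Z = mode1 j (ptrace_B d A)"
  have Z: "Z \<in> carrier_mat d d" unfolding Z_def mode1_def ptrace_B_def by simp
  obtain w where w: "\<forall>x<d. \<forall>y<d. cmod (w x y) \<le> 1"
    and tn: "complex_of_real (trace_norm Z) = (\<Sum>x<d. \<Sum>y<d. w x y * Z $$ (y,x))"
    using trace_norm_eq_pairing[OF Z] by blast
  let ?k = "mode_kernel d j w"
  have "(\<Sum>r<d * d. \<Sum>s<d * d. cmod (?k r s)) \<le>
      (\<Sum>r<d * d. of_bool (0 \<le> int (r div d) + j \<and> int (r div d) + j < int d))"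
    using mode_kernel_row_sum[OF w] by (intro sum_mono) auto
  also have "\<dots> = real (card {r. r < d * d \<and> 0 \<le> int (r div d) + j \<and> int (r div d) + j < int d})"
    by (simp add: of_bool_def sum.If_cases Int_def conj_commute)
  also have "\<dots> \<le> real (dj d j)" using card_shiftable_le_dj by simp
  finally have total: "(\<Sum>r<d * d. \<Sum>s<d * d. cmod (?k r s)) \<le> real (dj d j)" .
  have rows: "\<forall>r<d * d. (\<Sum>s<d * d. cmod (?k r s)) \<le> 1"
  proof (intro allI impI)
    fix r assume "r < d * d"
    from mode_kernel_row_sum[OF w this] show "(\<Sum>s<d * d. cmod (?k r s)) \<le> 1"
      by (rule order_trans) simp
  qed
  have "trace_norm Z \<le> cmod (complex_of_real (trace_norm Z))" by simp
  also have "\<dots> = cmod (\<Sum>x<d. \<Sum>y<d. w x y * Z $$ (y,x))" by (simp only: tn)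
  also have "\<dots> = cmod (\<Sum>r<d * d. \<Sum>s<d * d. ?k r s * A $$ (s,r))"
    unfolding Z_def by (simp only: pairing_mode_kernel[OF A])
  also have "\<dots> \<le> ky_fan_norm (dj d j) A"
    using mode_kernel_col_sum[OF w] by (intro norm_pairing_le_ky_fan_norm[OF A rows _ total]) auto
  finally show ?thesis unfolding Mj_def Z_def .
qed

lemma Mj_ptrace_B_unitary_conj_le:
  assumes X: "X \<in> carrier_mat (d * d) (d * d)" and V: "unitary (d * d) V"
    and comm: "V * LAB d = LAB d * V"
  shows "Mj j (ptrace_B d (V * X * mat_adjoint V)) \<le> ky_fan_norm (dj d j) (mode2 d j X)"
proof -
  note v = unitaryD[OF V]
  let ?M = "mode2 d j X"
  have M: "?M \<in> carrier_mat (d * d) (d * d)" by (rule mode2_carrier[OF X])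
  have conj: "mode2 d j (V * Y * mat_adjoint V) = V * mode2 d j Y * mat_adjoint V"
    if "Y \<in> carrier_mat (d * d) (d * d)" for Y by (rule mode2_unitary_conj[OF v(1) comm that])
  have VXV: "V * X * mat_adjoint V \<in> carrier_mat (d * d) (d * d)" using X v(1) by auto
  have VMV: "V * ?M * mat_adjoint V \<in> carrier_mat (d * d) (d * d)" using M v(1) by auto
  have "mode1 j (ptrace_B d (V * X * mat_adjoint V)) = ptrace_B d (mode2 d j (V * X * mat_adjoint V))"
    by (rule ptrace_B_mode2[OF VXV, symmetric])
  also have "\<dots> = ptrace_B d (mode2 d j (V * ?M * mat_adjoint V))"
    by (simp only: conj[OF X] conj[OF M] mode2_mode2[OF X])
  also have "\<dots> = mode1 j (ptrace_B d (V * ?M * mat_adjoint V))"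
    by (rule ptrace_B_mode2[OF VMV])
  finally have "Mj j (ptrace_B d (V * X * mat_adjoint V)) = Mj j (ptrace_B d (V * ?M * mat_adjoint V))"
    unfolding Mj_def by simp
  also have "\<dots> \<le> ky_fan_norm (dj d j) (V * ?M * mat_adjoint V)"
    using M v(1) by (intro Mj_ptrace_B_le_ky_fan_norm) auto
  also have "\<dots> = ky_fan_norm (dj d j) ?M"
    unfolding ky_fan_norm_def using singular_values_unitary_conj[OF V M] by simp
  finally show ?thesis .
qed

theorem mainTheorem5:
  fixes d :: nat and \<rho> :: "complex mat" and j :: int
  assumes "density d \<rho>" and "j \<noteq> 0"
  shows "DeltaM_A d j \<rho> \<le> ky_fan_norm (dj d j) (mode2 d j (tensor d \<rho> \<rho>)) - Mj j \<rho>"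
proof -
  let ?S = "{Mj j (ptrace_B d (V * tensor d \<rho> \<rho> * mat_adjoint V)) | V.
    unitary (d * d) V \<and> V * LAB d = LAB d * V}"
  have X: "tensor d \<rho> \<rho> \<in> carrier_mat (d * d) (d * d)" unfolding tensor_def by simp
  have "1\<^sub>m (d * d) * LAB d = LAB d * 1\<^sub>m (d * d)" by (simp add: LAB_def)
  hence "?S \<noteq> {}" using unitary_one by blast
  hence "Sup ?S \<le> ky_fan_norm (dj d j) (mode2 d j (tensor d \<rho> \<rho>))"
    by (rule cSup_least) (auto intro: Mj_ptrace_B_unitary_conj_le[OF X])
  thus ?thesis unfolding DeltaM_A_def by simp
qed

end
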